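(* Let $k_1,k_2,k_3\ge 1$ be integers and $G$ the grid graph with vertex set $\{0,\dots,k_1\}\times\{0,\dots,k_2\}\times\{0,\dots,k_3\}$, two vertices adjacent iff they differ by $1$ in exactly one coordinate. Let $\mathcal B=\{B_1,\dots,B_m\}$ be a family of boxes $B_i=[a_i',a_i'']\times[b_i',b_i'']\times[c_i',c_i'']\subseteq\mathbb R^3$ with integers $0\le a_i'<a_i''\le k_1$, $0\le b_i'<b_i''\le k_2$, $0\le c_i'<c_i''\le k_3$, and let $G_i$ be the subgraph of $G$ induced by the vertices of $G$ lying in $B_i$. Let $\widetilde G$ be the graph with vertex set $V(G)\cup\{(u,i):1\le i\le m,\ u\in V(G_i)\}$ whose edges are: all edges of $G$; for each $i$, the edges $(u,i)(w,i)$ for every edge $uw$ of $G_i$; and for each $i$ and each $u\in V(G_i)$, the edge $u\,(u,i)$. Then $\widetilde G$ is a median graph.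
   Context: A connected graph is median if for every three vertices $x,y,z$ the set $I(x,y)\cap I(y,z)\cap I(z,x)$ is a single vertex, where $I(u,v)=\{w: d(u,w)+d(w,v)=d(u,v)\}$ and $d$ is the shortest-path distance. (Geometrically, $\widetilde G$ is the 1-skeleton of the box complex obtained from the box $[0,k_1]\times[0,k_2]\times[0,k_3]$ subdivided into unit cells by attaching, for each $i$, the 4-dimensional box $B_i\times[0,1]$ along $B_i$ in a new, $i$-th, coordinate direction.) *)

theory Defs
  imports Main
begin

definition walk_of_len :: "'v set \<Rightarrow> ('v \<Rightarrow> 'v \<Rightarrow> bool) \<Rightarrow> 'v \<Rightarrow> 'v \<Rightarrow> nat \<Rightarrow> bool" where
  "walk_of_len V E u v n \<longleftrightarrow> (\<exists>xs. length xs = Suc n \<and> hd xs = u \<and> last xs = v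
      \<and> set xs \<subseteq> V \<and> (\<forall>j < n. E (xs ! j) (xs ! Suc j)))"

definition graph_connected :: "'v set \<Rightarrow> ('v \<Rightarrow> 'v \<Rightarrow> bool) \<Rightarrow> bool" where
  "graph_connected V E \<longleftrightarrow> V \<noteq> {} \<and> (\<forall>u\<in>V. \<forall>v\<in>V. \<exists>n. walk_of_len V E u v n)"

definition gdist :: "'v set \<Rightarrow> ('v \<Rightarrow> 'v \<Rightarrow> bool) \<Rightarrow> 'v \<Rightarrow> 'v \<Rightarrow> nat" where
  "gdist V E u v = (LEAST n. walk_of_len V E u v n)"

definition interval :: "'v set \<Rightarrow> ('v \<Rightarrow> 'v \<Rightarrow> bool) \<Rightarrow> 'v \<Rightarrow> 'v \<Rightarrow> 'v set" where
  "interval V E u v = {w\<in>V. gdist V E u w + gdist V E w v = gdist V E u v}"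

definition median_graph :: "'v set \<Rightarrow> ('v \<Rightarrow> 'v \<Rightarrow> bool) \<Rightarrow> bool" where
  "median_graph V E \<longleftrightarrow> graph_connected V E \<and>
     (\<forall>x\<in>V. \<forall>y\<in>V. \<forall>z\<in>V. \<exists>!w. w \<in> interval V E x y \<inter> interval V E y z \<inter> interval V E z x)"

type_synonym pt = "nat \<times> nat \<times> nat"

definition grid_verts :: "nat \<Rightarrow> nat \<Rightarrow> nat \<Rightarrow> pt set" where
  "grid_verts k1 k2 k3 = {0..k1} \<times> {0..k2} \<times> {0..k3}"

fun grid_adj :: "pt \<Rightarrow> pt \<Rightarrow> bool" where
  "grid_adj (x1, x2, x3) (y1, y2, y3) \<longleftrightarrow>
     \<bar>int x1 - int y1\<bar> + \<bar>int x2 - int y2\<bar> + \<bar>int x3 - int y3\<bar> = 1"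

definition box_verts :: "nat \<Rightarrow> nat \<Rightarrow> nat \<Rightarrow> nat \<Rightarrow> nat \<Rightarrow> nat \<Rightarrow> pt set" where
  "box_verts a1 a2 b1 b2 c1 c2 = {a1..a2} \<times> {b1..b2} \<times> {c1..c2}"

text \<open>Vertex set of the augmented graph: Inl u for u in V(G), Inr (u,i) for u in V(G_i).\<close>
definition aug_verts :: "nat \<Rightarrow> nat \<Rightarrow> nat \<Rightarrow> nat \<Rightarrow> (nat \<Rightarrow> pt set) \<Rightarrow> (pt + pt \<times> nat) set" where
  "aug_verts k1 k2 k3 m B =
     Inl ` grid_verts k1 k2 k3 \<union> {Inr (u, i) | u i. i \<in> {1..m} \<and> u \<in> grid_verts k1 k2 k3 \<inter> B i}"

fun aug_adj :: "nat \<Rightarrow> nat \<Rightarrow> nat \<Rightarrow> nat \<Rightarrow> (nat \<Rightarrow> pt set) \<Rightarrow> (pt + pt \<times> nat) \<Rightarrow> (pt + pt \<times> nat) \<Rightarrow> bool" where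
  "aug_adj k1 k2 k3 m B (Inl u) (Inl w) \<longleftrightarrow>
     u \<in> grid_verts k1 k2 k3 \<and> w \<in> grid_verts k1 k2 k3 \<and> grid_adj u w"
| "aug_adj k1 k2 k3 m B (Inr (u, i)) (Inr (w, j)) \<longleftrightarrow>
     i = j \<and> i \<in> {1..m} \<and> u \<in> grid_verts k1 k2 k3 \<inter> B i \<and> w \<in> grid_verts k1 k2 k3 \<inter> B i \<and> grid_adj u w"
| "aug_adj k1 k2 k3 m B (Inl u) (Inr (w, i)) \<longleftrightarrow>
     u = w \<and> i \<in> {1..m} \<and> u \<in> grid_verts k1 k2 k3 \<inter> B i"
| "aug_adj k1 k2 k3 m B (Inr (w, i)) (Inl u) \<longleftrightarrow>
     u = w \<and> i \<in> {1..m} \<and> u \<in> grid_verts k1 k2 k3 \<inter> B i"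

end

theory Submission
  imports Defs
begin

text \<open>Send a grid vertex \<open>u\<close> to \<open>(u, 0)\<close> and its copy \<open>(u, i)\<close> to \<open>(u, e\<^sub>i)\<close> in
  \<open>\<int>\<^sup>3 \<times> \<int>\<^sup>m\<close>. This is an isometry for the \<open>\<ell>\<^sub>1\<close>-metric: two vertices are at distance
  \<open>\<parallel>u - w\<parallel>\<^sub>1\<close> plus 0, 1 or 2 according as they lie in the same layer, exactly one of them lies
  in the base grid, or they lie in two different copies; a shortest path can be realised
  because a box contains the grid steps towards any of its points. In \<open>\<ell>\<^sub>1\<close> the three
  intervals of a triple meet only in the coordinatewise median, and the image is closed under
  it: the median of the grid parts lies in every box containing two of the three points, and the
  median of the unit-vector parts is \<open>e\<^sub>s\<close> for a layer \<open>s\<close> shared by two of them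
  (or \<open>0\<close> if there is none).\<close>

definition med3 :: "'a::linorder \<Rightarrow> 'a \<Rightarrow> 'a \<Rightarrow> 'a" where
  "med3 a b c = max (min a b) (min (max a b) c)"

lemma med3_rotate: "med3 a b c = med3 b c a"
  by (auto simp: med3_def min_def max_def)

lemma of_nat_med3:
  "of_nat (med3 a b c) = (med3 (of_nat a) (of_nat b) (of_nat c) :: 'a::linordered_semidom)"
  by (auto simp: med3_def min_def max_def)

lemma med3_of_bool:
  "med3 (of_bool p) (of_bool q) (of_bool r) = (of_bool (p \<and> q \<or> q \<and> r \<or> p \<and> r) :: 'a::linordered_semidom)"
  by (cases p; cases q; cases r) (simp_all add: med3_def)

lemma le_med3_iff: "x \<le> med3 a b c \<longleftrightarrow> x \<le> a \<and> x \<le> b \<or> x \<le> b \<and> x \<le> c \<or> x \<le> a \<and> x \<le> c"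
  by (auto simp: med3_def min_def max_def)

lemma med3_le_iff: "med3 a b c \<le> x \<longleftrightarrow> a \<le> x \<and> b \<le> x \<or> b \<le> x \<and> c \<le> x \<or> a \<le> x \<and> c \<le> x"
  by (auto simp: med3_def min_def max_def)

lemma abs_between_iff:
  "\<bar>a - v\<bar> + \<bar>v - b\<bar> = \<bar>a - b\<bar> \<longleftrightarrow> min a b \<le> v \<and> v \<le> max (a::'a::linordered_idom) b"
  by (auto simp: abs_if min_def max_def)

lemma med3_between: "\<bar>a - med3 a b c\<bar> + \<bar>med3 a b c - b\<bar> = \<bar>a - (b::'a::linordered_idom)\<bar>"
  unfolding abs_between_iff by (auto simp: med3_def min_def max_def)

lemma med3_unique:
  fixes a b c v :: "'a::linordered_idom"
  assumes "\<bar>a - v\<bar> + \<bar>v - b\<bar> = \<bar>a - b\<bar>" "\<bar>b - v\<bar> + \<bar>v - c\<bar> = \<bar>b - c\<bar>"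
    "\<bar>c - v\<bar> + \<bar>v - a\<bar> = \<bar>c - a\<bar>"
  shows "v = med3 a b c"
  using assms unfolding abs_between_iff med3_def min_def max_def by (auto split: if_splits)

definition l1_dist :: "'k set \<Rightarrow> ('k \<Rightarrow> 'a::linordered_idom) \<Rightarrow> ('k \<Rightarrow> 'a) \<Rightarrow> 'a" where
  "l1_dist K p q = (\<Sum>k\<in>K. \<bar>p k - q k\<bar>)"

lemma l1_dist_nonneg: "0 \<le> l1_dist K p q"
  unfolding l1_dist_def by (rule sum_nonneg) simp

lemma l1_dist_self [simp]: "l1_dist K p p = 0"
  by (simp add: l1_dist_def)

lemma l1_dist_triangle: "l1_dist K p r \<le> l1_dist K p q + l1_dist K q r"
  unfolding l1_dist_def sum.distrib[symmetric] by (intro sum_mono) arith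

lemma l1_dist_med3:
  "l1_dist K p (\<lambda>k. med3 (p k) (q k) (r k)) + l1_dist K (\<lambda>k. med3 (p k) (q k) (r k)) q = l1_dist K p q"
  unfolding l1_dist_def sum.distrib[symmetric] by (simp add: med3_between)

lemma l1_dist_between_pointwise:
  assumes "finite K" "l1_dist K p v + l1_dist K v q = l1_dist K p q" "k \<in> K"
  shows "\<bar>p k - v k\<bar> + \<bar>v k - q k\<bar> = \<bar>p k - q k\<bar>"
proof -
  define excess where "excess k = \<bar>p k - v k\<bar> + \<bar>v k - q k\<bar> - \<bar>p k - q k\<bar>" for k
  have "sum excess K = 0"
    using assms(2) by (simp add: excess_def l1_dist_def sum.distrib sum_subtractf)
  moreover have "\<forall>k\<in>K. 0 \<le> excess k"
    unfolding excess_def by (intro ballI) arith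
  ultimately have "excess k = 0"
    using sum_nonneg_eq_0_iff[OF assms(1)] assms(3) by blast
  then show ?thesis by (simp add: excess_def)
qed

lemma walk_of_len_0_iff: "walk_of_len V E x y 0 \<longleftrightarrow> x \<in> V \<and> y = x"
proof
  assume "walk_of_len V E x y 0"
  then obtain xs where "length xs = 1" "hd xs = x" "last xs = y" "set xs \<subseteq> V"
    unfolding walk_of_len_def by auto
  then show "x \<in> V \<and> y = x" by (cases xs) auto
qed (auto simp: walk_of_len_def intro: exI[of _ "[x]"])

lemma walk_of_len_Cons:
  assumes "x \<in> V" "E x z" "walk_of_len V E z y n"
  shows "walk_of_len V E x y (Suc n)"
proof -
  obtain xs where xs: "length xs = Suc n" "hd xs = z" "last xs = y" "set xs \<subseteq> V"
    "\<forall>j<n. E (xs ! j) (xs ! Suc j)"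
    using assms(3) unfolding walk_of_len_def by blast
  have "xs \<noteq> []" using xs(1) by auto
  then have "\<forall>j<Suc n. E ((x # xs) ! j) ((x # xs) ! Suc j)"
    using xs assms(2) by (auto simp: less_Suc_eq_0_disj hd_conv_nth)
  then show ?thesis
    unfolding walk_of_len_def using xs assms(1) by (intro exI[of _ "x # xs"]) auto
qed

lemma gdist_eq_0_iff:
  assumes "graph_connected V E" "x \<in> V" "y \<in> V"
  shows "gdist V E x y = 0 \<longleftrightarrow> x = y"
proof
  assume "gdist V E x y = 0"
  moreover obtain n where "walk_of_len V E x y n"
    using assms unfolding graph_connected_def by blast
  ultimately have "walk_of_len V E x y 0"
    unfolding gdist_def by (metis LeastI)
  then show "x = y" by (simp add: walk_of_len_0_iff)
next
  assume "x = y"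
  then show "gdist V E x y = 0"
    using assms(2) by (simp add: gdist_def walk_of_len_0_iff)
qed

locale geodesic_distance =
  fixes V :: "'v set" and E :: "'v \<Rightarrow> 'v \<Rightarrow> bool" and d :: "'v \<Rightarrow> 'v \<Rightarrow> int"
  assumes dist_self: "x \<in> V \<Longrightarrow> d x x = 0"
    and dist_nonneg: "x \<in> V \<Longrightarrow> y \<in> V \<Longrightarrow> 0 \<le> d x y"
    and dist_triangle: "x \<in> V \<Longrightarrow> y \<in> V \<Longrightarrow> z \<in> V \<Longrightarrow> d x z \<le> d x y + d y z"
    and dist_adj: "E x y \<Longrightarrow> x \<in> V \<Longrightarrow> y \<in> V \<Longrightarrow> d x y \<le> 1"
    and step_towards: "x \<in> V \<Longrightarrow> y \<in> V \<Longrightarrow> x \<noteq> y \<Longrightarrow> \<exists>z\<in>V. E x z \<and> d z y + 1 = d x y"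
begin

lemma dist_le_walk_length:
  assumes "walk_of_len V E x y n"
  shows "d x y \<le> int n"
  using assms
proof (induction n arbitrary: x)
  case 0
  then show ?case by (simp add: walk_of_len_0_iff dist_self)
next
  case (Suc n)
  then obtain xs where xs: "length xs = Suc (Suc n)" "hd xs = x" "last xs = y" "set xs \<subseteq> V"
    "\<forall>j<Suc n. E (xs ! j) (xs ! Suc j)"
    unfolding walk_of_len_def by blast
  then obtain z zs where xs_eq: "xs = x # z # zs" by (metis Suc_length_conv list.sel(1))
  have "walk_of_len V E z y n"
    unfolding walk_of_len_def using xs xs_eq by (intro exI[of _ "z # zs"]) auto
  moreover have "E x z"
    using xs(5) xs_eq by (metis nth_Cons_0 nth_Cons_Suc zero_less_Suc)
  moreover have "x \<in> V" "z \<in> V" "y \<in> V"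
    using xs(3,4) xs_eq by (auto dest: subsetD[OF _ last_in_set])
  ultimately show ?case
    using Suc.IH dist_adj dist_triangle[of x z y] by fastforce
qed

lemma walk_of_dist: "x \<in> V \<Longrightarrow> y \<in> V \<Longrightarrow> walk_of_len V E x y (nat (d x y))"
proof (induction "nat (d x y)" arbitrary: x)
  case 0
  then have "x = y" using step_towards dist_nonneg by fastforce
  then show ?case using 0 by (simp add: walk_of_len_0_iff)
next
  case (Suc n)
  then have "x \<noteq> y" using dist_self by fastforce
  then obtain z where z: "z \<in> V" "E x z" "d z y + 1 = d x y"
    using step_towards Suc.prems by blast
  then have "n = nat (d z y)"
    using Suc.hyps(2) dist_nonneg[OF z(1) Suc.prems(2)] by linarith
  then have "walk_of_len V E z y n"
    using Suc.hyps(1) z(1) Suc.prems(2) by blast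
  then show ?case
    using walk_of_len_Cons[of x V E z y n] Suc.prems(1) z(2) Suc.hyps(2) by simp
qed

lemma gdist_eq:
  assumes "x \<in> V" "y \<in> V"
  shows "int (gdist V E x y) = d x y"
proof -
  have "(LEAST n. walk_of_len V E x y n) = nat (d x y)"
  proof (rule Least_equality)
    show "walk_of_len V E x y (nat (d x y))" using walk_of_dist assms .
  next
    fix n assume "walk_of_len V E x y n"
    then show "nat (d x y) \<le> n" using dist_le_walk_length by fastforce
  qed
  then show ?thesis using dist_nonneg assms by (simp add: gdist_def)
qed

lemma graph_connected_if_nonempty: "V \<noteq> {} \<Longrightarrow> graph_connected V E"
  unfolding graph_connected_def using walk_of_dist by blast

end

lemma interval_iff_l1_between:
  fixes f :: "'v \<Rightarrow> 'k \<Rightarrow> int"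
  assumes iso: "\<And>x y. x \<in> V \<Longrightarrow> y \<in> V \<Longrightarrow> int (gdist V E x y) = l1_dist K (f x) (f y)"
    and "x \<in> V" "y \<in> V"
  shows "w \<in> interval V E x y \<longleftrightarrow>
    w \<in> V \<and> l1_dist K (f x) (f w) + l1_dist K (f w) (f y) = l1_dist K (f x) (f y)"
proof (cases "w \<in> V")
  case True
  have "gdist V E x w + gdist V E w y = gdist V E x y \<longleftrightarrow>
      int (gdist V E x w) + int (gdist V E w y) = int (gdist V E x y)"
    by linarith
  then show ?thesis using True assms by (simp add: interval_def)
qed (simp add: interval_def)

lemma median_graph_if_median_closed_l1_embedding:
  fixes f :: "'v \<Rightarrow> 'k \<Rightarrow> int"
  assumes "finite K" and connected: "graph_connected V E"
    and iso: "\<And>x y. x \<in> V \<Longrightarrow> y \<in> V \<Longrightarrow> int (gdist V E x y) = l1_dist K (f x) (f y)"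
    and closed: "\<And>x y z. x \<in> V \<Longrightarrow> y \<in> V \<Longrightarrow> z \<in> V \<Longrightarrow>
      \<exists>w\<in>V. \<forall>k\<in>K. f w k = med3 (f x k) (f y k) (f z k)"
  shows "median_graph V E"
  unfolding median_graph_def
proof (intro conjI connected ballI)
  fix x y z assume xyz: "x \<in> V" "y \<in> V" "z \<in> V"
  define M where "M k = med3 (f x k) (f y k) (f z k)" for k
  have is_med: "w \<in> interval V E x y \<inter> interval V E y z \<inter> interval V E z x \<longleftrightarrow>
      w \<in> V \<and> (\<forall>k\<in>K. f w k = M k)" for w
  proof
    assume "w \<in> interval V E x y \<inter> interval V E y z \<inter> interval V E z x"
    then show "w \<in> V \<and> (\<forall>k\<in>K. f w k = M k)"
      unfolding M_def using xyz \<open>finite K\<close>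
      by (auto simp: interval_iff_l1_between[OF iso]
          intro!: med3_unique dest: l1_dist_between_pointwise)
  next
    assume w: "w \<in> V \<and> (\<forall>k\<in>K. f w k = M k)"
    have M_rotated: "M = (\<lambda>k. med3 (f y k) (f z k) (f x k))" "M = (\<lambda>k. med3 (f z k) (f x k) (f y k))"
      unfolding M_def by (metis med3_rotate)+
    have "l1_dist K p (f w) = l1_dist K p M" "l1_dist K (f w) p = l1_dist K M p" for p
      using w by (simp_all add: l1_dist_def)
    then show "w \<in> interval V E x y \<inter> interval V E y z \<inter> interval V E z x"
      using w xyz l1_dist_med3[of K "f x" "f y" "f z", folded M_def]
        l1_dist_med3[of K "f y" "f z" "f x", folded M_rotated(1)]
        l1_dist_med3[of K "f z" "f x" "f y", folded M_rotated(2)]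
      by (simp add: interval_iff_l1_between[OF iso])
  qed
  obtain w where "w \<in> V" "\<forall>k\<in>K. f w k = M k"
    using closed[OF xyz] unfolding M_def by blast
  moreover have "w' = w" if "w' \<in> V" "\<forall>k\<in>K. f w' k = M k" for w'
  proof -
    have "int (gdist V E w' w) = 0"
      using that \<open>w \<in> V\<close> \<open>\<forall>k\<in>K. f w k = M k\<close> by (simp add: iso l1_dist_def)
    then show ?thesis using gdist_eq_0_iff[OF connected] that \<open>w \<in> V\<close> by simp
  qed
  ultimately show "\<exists>!w. w \<in> interval V E x y \<inter> interval V E y z \<inter> interval V E z x"
    unfolding is_med by blast
qed

fun pt_vec :: "pt \<Rightarrow> nat \<Rightarrow> int" where
  "pt_vec (a, b, c) k = int (if k = 0 then a else if k = 1 then b else c)"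

lemma l1_dist_pt_vec:
  "l1_dist {..<3} (pt_vec (a, b, c)) (pt_vec (a', b', c')) =
     \<bar>int a - int a'\<bar> + \<bar>int b - int b'\<bar> + \<bar>int c - int c'\<bar>"
  by (simp add: l1_dist_def numeral_3_eq_3 lessThan_Suc)

lemma grid_adj_iff_l1_dist: "grid_adj u w \<longleftrightarrow> l1_dist {..<3} (pt_vec u) (pt_vec w) = 1"
  by (cases u; cases w) (simp add: l1_dist_pt_vec)

fun pt_med3 :: "pt \<Rightarrow> pt \<Rightarrow> pt \<Rightarrow> pt" where
  "pt_med3 (a, b, c) (a', b', c') (a'', b'', c'') = (med3 a a' a'', med3 b b' b'', med3 c c' c'')"

lemma pt_vec_pt_med3: "pt_vec (pt_med3 u v w) k = med3 (pt_vec u k) (pt_vec v k) (pt_vec w k)"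
  by (cases u; cases v; cases w) (simp add: of_nat_med3)

lemma pt_med3_in_box:
  assumes "u \<in> S \<and> v \<in> S \<or> v \<in> S \<and> w \<in> S \<or> u \<in> S \<and> w \<in> S"
    and "S = box_verts a1 a2 b1 b2 c1 c2"
  shows "pt_med3 u v w \<in> S"
  using assms by (cases u; cases v; cases w) (auto simp: box_verts_def le_med3_iff med3_le_iff)

lemma grid_verts_eq_box: "grid_verts k1 k2 k3 = box_verts 0 k1 0 k2 0 k3"
  by (simp add: grid_verts_def box_verts_def)

lemma grid_step_towards:
  assumes "u \<noteq> w"
  obtains z where "grid_adj u z"
    and "l1_dist {..<3} (pt_vec z) (pt_vec w) + 1 = l1_dist {..<3} (pt_vec u) (pt_vec w)"
    and "\<And>a1 a2 b1 b2 c1 c2. u \<in> box_verts a1 a2 b1 b2 c1 c2 \<Longrightarrow>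
      w \<in> box_verts a1 a2 b1 b2 c1 c2 \<Longrightarrow> z \<in> box_verts a1 a2 b1 b2 c1 c2"
proof -
  obtain a b c a' b' c' where u: "u = (a, b, c)" and w: "w = (a', b', c')"
    by (cases u; cases w)
  consider "a < a'" | "a' < a" | "a = a'" "b < b'" | "a = a'" "b' < b"
    | "a = a'" "b = b'" "c < c'" | "a = a'" "b = b'" "c' < c"
    using assms u w by (metis linorder_neqE_nat)
  then show ?thesis
  proof cases
    case 1
    show ?thesis
      by (rule that[of "(a + 1, b, c)"])
        (use 1 u w in \<open>auto simp: box_verts_def l1_dist_pt_vec\<close>)
  next
    case 2
    show ?thesis
      by (rule that[of "(a - 1, b, c)"])
        (use 2 u w in \<open>auto simp: box_verts_def l1_dist_pt_vec\<close>)
  next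
    case 3
    show ?thesis
      by (rule that[of "(a, b + 1, c)"])
        (use 3 u w in \<open>auto simp: box_verts_def l1_dist_pt_vec\<close>)
  next
    case 4
    show ?thesis
      by (rule that[of "(a, b - 1, c)"])
        (use 4 u w in \<open>auto simp: box_verts_def l1_dist_pt_vec\<close>)
  next
    case 5
    show ?thesis
      by (rule that[of "(a, b, c + 1)"])
        (use 5 u w in \<open>auto simp: box_verts_def l1_dist_pt_vec\<close>)
  next
    case 6
    show ?thesis
      by (rule that[of "(a, b, c - 1)"])
        (use 6 u w in \<open>auto simp: box_verts_def l1_dist_pt_vec\<close>)
  qed
qed

fun base :: "pt + pt \<times> nat \<Rightarrow> pt" where
  "base (Inl u) = u"
| "base (Inr (u, i)) = u"

fun layer :: "pt + pt \<times> nat \<Rightarrow> nat" where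
  "layer (Inl u) = 0"
| "layer (Inr (u, i)) = i"

definition aug_vertex :: "pt \<Rightarrow> nat \<Rightarrow> pt + pt \<times> nat" where
  "aug_vertex u i = (if i = 0 then Inl u else Inr (u, i))"

lemma base_aug_vertex [simp]: "base (aug_vertex u i) = u"
  and layer_aug_vertex [simp]: "layer (aug_vertex u i) = i"
  by (simp_all add: aug_vertex_def)

definition layer_dist :: "nat \<Rightarrow> nat \<Rightarrow> int" where
  "layer_dist i j = (if i = j then 0 else if i = 0 \<or> j = 0 then 1 else 2)"

definition aug_vec :: "pt + pt \<times> nat \<Rightarrow> nat \<Rightarrow> int" where
  "aug_vec x k = (if k < 3 then pt_vec (base x) k else of_bool (k = layer x + 2))"

lemma l1_dist_unit_vectors:
  assumes "i \<le> m" "j \<le> m"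
  shows "l1_dist {3..m + 2} (\<lambda>k. of_bool (k = i + 2)) (\<lambda>k. of_bool (k = j + 2)) = layer_dist i j"
proof -
  have "\<bar>of_bool (k = i + 2) - of_bool (k = j + 2)\<bar> =
      of_bool (i \<noteq> 0 \<and> i \<noteq> j \<and> k = i + 2) + (of_bool (j \<noteq> 0 \<and> i \<noteq> j \<and> k = j + 2) :: int)"
    if "3 \<le> k" for k
    using that by auto
  then show ?thesis
    using assms by (simp add: l1_dist_def sum.distrib layer_dist_def)
qed

definition majority3 :: "nat \<Rightarrow> nat \<Rightarrow> nat \<Rightarrow> nat" where
  "majority3 i j l = (if i = j \<or> i = l then i else if j = l then j else 0)"

lemma unit_vector_majority3:
  assumes "3 \<le> k"
  shows "of_bool (k = majority3 i j l + 2) =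
    med3 (of_bool (k = i + 2)) (of_bool (k = j + 2)) (of_bool (k = l + 2) :: int)"
  using assms by (auto simp: majority3_def med3_of_bool)

locale box_augmented_grid =
  fixes k1 k2 k3 m :: nat and B :: "nat \<Rightarrow> pt set"
  assumes boxes: "i \<in> {1..m} \<Longrightarrow> \<exists>a1 a2 b1 b2 c1 c2. B i = box_verts a1 a2 b1 b2 c1 c2"
begin

abbreviation "V \<equiv> aug_verts k1 k2 k3 m B"
abbreviation "E \<equiv> aug_adj k1 k2 k3 m B"
abbreviation "G \<equiv> grid_verts k1 k2 k3"

definition aug_dist :: "pt + pt \<times> nat \<Rightarrow> pt + pt \<times> nat \<Rightarrow> int" where
  "aug_dist x y = l1_dist {..m + 2} (aug_vec x) (aug_vec y)"

lemma Inl_in_V_iff [simp]: "Inl u \<in> V \<longleftrightarrow> u \<in> G"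
  by (auto simp: aug_verts_def)

lemma Inr_in_V_iff [simp]: "Inr (u, i) \<in> V \<longleftrightarrow> i \<in> {1..m} \<and> u \<in> G \<inter> B i"
  unfolding aug_verts_def by blast

lemma base_in_G: "x \<in> V \<Longrightarrow> base x \<in> G"
  by (cases x) auto

lemma layer_in_V: "x \<in> V \<Longrightarrow> layer x \<noteq> 0 \<Longrightarrow> layer x \<in> {1..m} \<and> base x \<in> B (layer x)"
  by (cases x) auto

lemma aug_dist_eq:
  assumes "x \<in> V" "y \<in> V"
  shows "aug_dist x y =
    l1_dist {..<3} (pt_vec (base x)) (pt_vec (base y)) + layer_dist (layer x) (layer y)"
proof -
  have split: "{..m + 2} = {..<3} \<union> {3..m + 2}" by auto
  have "layer x \<le> m" "layer y \<le> m"
    using assms layer_in_V by fastforce+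
  then show ?thesis
    unfolding aug_dist_def split l1_dist_def
    by (subst sum.union_disjoint)
       (auto simp: aug_vec_def l1_dist_unit_vectors[unfolded l1_dist_def, symmetric]
          intro!: arg_cong2[where f = "(+)"] sum.cong)
qed

lemma aug_adj_in_V: "E x y \<Longrightarrow> x \<in> V \<and> y \<in> V"
  by (cases x; cases y) auto

lemma aug_dist_adj: "E x y \<Longrightarrow> aug_dist x y = 1"
  using aug_adj_in_V[of x y]
  by (cases x; cases y) (auto simp: aug_dist_eq layer_dist_def grid_adj_iff_l1_dist)

lemma V_aug_vertex_iff:
  "aug_vertex u i \<in> V \<longleftrightarrow> u \<in> G \<and> (i \<noteq> 0 \<longrightarrow> i \<in> {1..m} \<and> u \<in> B i)"
  by (auto simp: aug_vertex_def)

lemma aug_vertex_of_V: "x \<in> V \<Longrightarrow> aug_vertex (base x) (layer x) = x"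
  by (cases x) (auto simp: aug_vertex_def)

lemma aug_adj_within_layer:
  "x \<in> V \<Longrightarrow> E x (aug_vertex z (layer x)) \<longleftrightarrow> aug_vertex z (layer x) \<in> V \<and> grid_adj (base x) z"
  by (cases x) (auto simp: aug_vertex_def)

lemma grid_step_within_layer:
  assumes "x \<in> V" "y \<in> V" "base x \<noteq> base y" "layer x \<noteq> 0 \<Longrightarrow> base y \<in> B (layer x)"
  obtains z where "aug_vertex z (layer x) \<in> V" "E x (aug_vertex z (layer x))"
    "l1_dist {..<3} (pt_vec z) (pt_vec (base y)) + 1 = l1_dist {..<3} (pt_vec (base x)) (pt_vec (base y))"
proof -
  obtain z where z: "grid_adj (base x) z"
    "l1_dist {..<3} (pt_vec z) (pt_vec (base y)) + 1 = l1_dist {..<3} (pt_vec (base x)) (pt_vec (base y))"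
    and in_box: "\<And>a1 a2 b1 b2 c1 c2. base x \<in> box_verts a1 a2 b1 b2 c1 c2 \<Longrightarrow>
      base y \<in> box_verts a1 a2 b1 b2 c1 c2 \<Longrightarrow> z \<in> box_verts a1 a2 b1 b2 c1 c2"
    using grid_step_towards assms(3) by blast
  have "z \<in> G"
    using in_box base_in_G[OF assms(1)] base_in_G[OF assms(2)] unfolding grid_verts_eq_box .
  moreover have "layer x \<in> {1..m} \<and> z \<in> B (layer x)" if nonzero: "layer x \<noteq> 0"
  proof -
    obtain a1 a2 b1 b2 c1 c2 where "B (layer x) = box_verts a1 a2 b1 b2 c1 c2"
      using boxes layer_in_V[OF assms(1) nonzero] by blast
    then show ?thesis
      using in_box layer_in_V[OF assms(1) nonzero] assms(4)[OF nonzero] by auto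
  qed
  ultimately have "aug_vertex z (layer x) \<in> V"
    by (simp add: V_aug_vertex_iff)
  then show ?thesis
    using that z assms(1) aug_adj_within_layer by blast
qed

lemma aug_step_towards:
  assumes "x \<in> V" "y \<in> V" "x \<noteq> y"
  shows "\<exists>z\<in>V. E x z \<and> aug_dist z y + 1 = aug_dist x y"
proof (cases "layer x = layer y")
  case True
  then have "base x \<noteq> base y"
    using assms aug_vertex_of_V by metis
  moreover have "base y \<in> B (layer x)" if "layer x \<noteq> 0"
    using layer_in_V[OF assms(2)] True that by simp
  ultimately obtain z where "aug_vertex z (layer x) \<in> V" "E x (aug_vertex z (layer x))"
    "l1_dist {..<3} (pt_vec z) (pt_vec (base y)) + 1 = l1_dist {..<3} (pt_vec (base x)) (pt_vec (base y))"
    using grid_step_within_layer assms(1,2) by blast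
  then show ?thesis
    using assms True by (intro bexI[of _ "aug_vertex z (layer x)"]) (auto simp: aug_dist_eq)
next
  case False
  show ?thesis
  proof (cases "layer x = 0")
    case False
    then obtain u i where x: "x = Inr (u, i)"
      by (cases x) auto
    then show ?thesis
      using assms \<open>layer x \<noteq> layer y\<close>
      by (intro bexI[of _ "Inl u"]) (auto simp: aug_dist_eq layer_dist_def)
  next
    case True
    show ?thesis
    proof (cases "base x = base y")
      case True
      obtain u w j where "x = Inl u" "y = Inr (w, j)"
        using assms(1) \<open>layer x = 0\<close> \<open>layer x \<noteq> layer y\<close> by (cases x; cases y) auto
      then show ?thesis
        using assms True by (intro bexI[of _ y]) (auto simp: aug_dist_eq layer_dist_def)
    next
      case False
      then obtain z where "aug_vertex z 0 \<in> V" "E x (aug_vertex z 0)"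
        "l1_dist {..<3} (pt_vec z) (pt_vec (base y)) + 1 = l1_dist {..<3} (pt_vec (base x)) (pt_vec (base y))"
        using grid_step_within_layer assms(1,2) \<open>layer x = 0\<close> by metis
      then show ?thesis
        using assms \<open>layer x = 0\<close> by (intro bexI[of _ "aug_vertex z 0"]) (auto simp: aug_dist_eq)
    qed
  qed
qed

sublocale geodesic_distance V E aug_dist
proof
  show "aug_dist x x = 0" "0 \<le> aug_dist x y" "aug_dist x z \<le> aug_dist x y + aug_dist y z" for x y z
    by (simp_all add: aug_dist_def l1_dist_nonneg l1_dist_triangle)
qed (simp_all add: aug_dist_adj aug_step_towards)

lemma median_closed:
  assumes "x \<in> V" "y \<in> V" "z \<in> V"
  shows "\<exists>w\<in>V. \<forall>k\<in>{..m + 2}. aug_vec w k = med3 (aug_vec x k) (aug_vec y k) (aug_vec z k)"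
proof
  define p where "p = pt_med3 (base x) (base y) (base z)"
  define s where "s = majority3 (layer x) (layer y) (layer z)"
  have "aug_vec (aug_vertex p s) k = med3 (aug_vec x k) (aug_vec y k) (aug_vec z k)" for k
  proof (cases "k < 3")
    case True
    then show ?thesis by (simp add: aug_vec_def p_def pt_vec_pt_med3)
  next
    case False
    then show ?thesis
      unfolding aug_vec_def if_not_P[OF False] layer_aug_vertex s_def
      by (intro unit_vector_majority3) simp
  qed
  then show "\<forall>k\<in>{..m + 2}. aug_vec (aug_vertex p s) k = med3 (aug_vec x k) (aug_vec y k) (aug_vec z k)"
    by blast
  have "p \<in> G"
    unfolding p_def grid_verts_eq_box
    by (rule pt_med3_in_box) (use assms base_in_G in \<open>auto simp: grid_verts_eq_box\<close>)
  moreover have "s \<in> {1..m} \<and> p \<in> B s" if "s \<noteq> 0"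
  proof -
    have two_in_layer: "s = layer x \<and> s = layer y \<or> s = layer y \<and> s = layer z \<or> s = layer x \<and> s = layer z"
      using that by (auto simp: s_def majority3_def split: if_splits)
    then have "s \<in> {1..m}"
      using that layer_in_V assms by metis
    then obtain a1 a2 b1 b2 c1 c2 where "B s = box_verts a1 a2 b1 b2 c1 c2"
      using boxes by blast
    moreover have "base x \<in> B s \<and> base y \<in> B s \<or> base y \<in> B s \<and> base z \<in> B s
        \<or> base x \<in> B s \<and> base z \<in> B s"
      using two_in_layer that layer_in_V assms by metis
    ultimately show ?thesis
      unfolding p_def using pt_med3_in_box \<open>s \<in> {1..m}\<close> by blast
  qed
  ultimately show "aug_vertex p s \<in> V"
    by (simp add: V_aug_vertex_iff)
qed

lemma median_graph: "median_graph V E"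
proof (rule median_graph_if_median_closed_l1_embedding[where K = "{..m + 2}" and f = aug_vec])
  have "Inl (0, 0, 0) \<in> V"
    by (simp add: grid_verts_def)
  then show "graph_connected V E"
    using graph_connected_if_nonempty by blast
  show "int (gdist V E x y) = l1_dist {..m + 2} (aug_vec x) (aug_vec y)" if "x \<in> V" "y \<in> V" for x y
    using gdist_eq that by (simp add: aug_dist_def)
qed (simp_all only: finite_atMost median_closed)

end

theorem lemma1:
  fixes k1 k2 k3 m :: nat
    and a1 a2 b1 b2 c1 c2 :: "nat \<Rightarrow> nat"
  assumes "k1 \<ge> 1" and "k2 \<ge> 1" and "k3 \<ge> 1"
    and "\<forall>i\<in>{1..m}. a1 i < a2 i \<and> a2 i \<le> k1"
    and "\<forall>i\<in>{1..m}. b1 i < b2 i \<and> b2 i \<le> k2"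
    and "\<forall>i\<in>{1..m}. c1 i < c2 i \<and> c2 i \<le> k3"
  shows "median_graph
           (aug_verts k1 k2 k3 m (\<lambda>i. box_verts (a1 i) (a2 i) (b1 i) (b2 i) (c1 i) (c2 i)))
           (aug_adj k1 k2 k3 m (\<lambda>i. box_verts (a1 i) (a2 i) (b1 i) (b2 i) (c1 i) (c2 i)))"
proof -
  interpret box_augmented_grid k1 k2 k3 m "\<lambda>i. box_verts (a1 i) (a2 i) (b1 i) (b2 i) (c1 i) (c2 i)"
    by unfold_locales blast
  show ?thesis by (rule median_graph)
qed

end
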